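(* Let $p$ be an odd prime. If $G$ is a quasi-powerful $p$-group then $G^{p}$ is powerful.
   Context: For an odd prime $p$, a finite $p$-group $G$ is powerful if $[G,G]\le G^{p}$, where $G^{p}=\langle g^{p}\mid g\in G\rangle$, and $G$ is quasi-powerful if $G/Z(G)$ is powerful. *)

theory Defs
  imports "HOL-Algebra.Algebra"
begin

definition center :: "('a, 'b) monoid_scheme \<Rightarrow> 'a set" where
  "center G = {z \<in> carrier G. \<forall>g \<in> carrier G. z \<otimes>\<^bsub>G\<^esub> g = g \<otimes>\<^bsub>G\<^esub> z}"

definition pth_powers :: "('a, 'b) monoid_scheme \<Rightarrow> nat \<Rightarrow> 'a set" where
  "pth_powers G p = generate G {g [^]\<^bsub>G\<^esub> p | g. g \<in> carrier G}"

definition p_group :: "('a, 'b) monoid_scheme \<Rightarrow> nat \<Rightarrow> bool" where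
  "p_group G p \<longleftrightarrow> group G \<and> finite (carrier G) \<and> (\<exists>n. order G = p ^ n)"

definition powerful :: "('a, 'b) monoid_scheme \<Rightarrow> nat \<Rightarrow> bool" where
  "powerful G p \<longleftrightarrow> derived G (carrier G) \<subseteq> pth_powers G p"

definition quasi_powerful :: "('a, 'b) monoid_scheme \<Rightarrow> nat \<Rightarrow> bool" where
  "quasi_powerful G p \<longleftrightarrow> powerful (G Mod (center G)) p"

end

theory Submission
  imports Defs
begin

text \<open>
  Let \<open>N = G\<^sup>p\<close> and \<open>M = N\<^sup>p\<close>; the claim is \<open>[N, N] \<le> M\<close>. Quasi-powerfulness says that
  every commutator of \<open>G\<close> lies in \<open>N Z(G)\<close>: write \<open>[x, g] = y = n z\<close> with \<open>n \<in> N\<close> and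
  \<open>z \<in> Z(G)\<close>, so that \<open>c = [y, x] = [n, x] \<in> [N, G]\<close>. If \<open>L \<ge> M Z(G)\<close> is normal and
  \<open>[N, G]\<close> is central modulo \<open>L\<close>, then \<open>y\<^sup>p, c\<^sup>p \<in> L\<close>, and the class-two collection formula
  \<open>(x y)\<^sup>p = x\<^sup>p y\<^sup>p c\<^bsup>p(p-1)/2\<^esup>\<close>, where \<open>p\<close> divides \<open>p(p-1)/2\<close> because \<open>p\<close> is odd,
  gives \<open>(x\<^sup>p)\<^sup>g = (x y)\<^sup>p \<equiv> x\<^sup>p\<close> modulo \<open>L\<close>. In a \<open>p\<close>-group a normal subgroup \<open>A\<close>
  properly containing a normal \<open>B\<close> has a central step \<open>B \<le> L < A\<close>; for \<open>B = M Z(G)\<close> and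
  \<open>A = [N, G] B\<close> this yields \<open>[N, G] \<le> M Z(G)\<close>. Hence for \<open>a \<in> N\<close> the commutator
  \<open>[a, g] \<in> N\<close> is central modulo \<open>M\<close>, so \<open>[a, g\<^sup>p] \<equiv> [a, g]\<^sup>p \<in> M\<close>, and \<open>[N, N] \<le> M\<close>
  because \<open>N\<close> is generated by \<open>p\<close>-th powers.
\<close>

definition commutator :: "('a, 'b) monoid_scheme \<Rightarrow> 'a \<Rightarrow> 'a \<Rightarrow> 'a" where
  "commutator G a b = inv\<^bsub>G\<^esub> a \<otimes>\<^bsub>G\<^esub> inv\<^bsub>G\<^esub> b \<otimes>\<^bsub>G\<^esub> a \<otimes>\<^bsub>G\<^esub> b"

text \<open>The preimage of the centre of \<open>G/H\<close>: \<open>[A, G] \<le> H\<close> is written \<open>A \<subseteq> center_mod G H\<close>.\<close>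

definition center_mod :: "('a, 'b) monoid_scheme \<Rightarrow> 'a set \<Rightarrow> 'a set" where
  "center_mod G H = {a \<in> carrier G. \<forall>g \<in> carrier G. commutator G a g \<in> H}"

abbreviation conj_action :: "('a, 'b) monoid_scheme \<Rightarrow> 'a \<Rightarrow> 'a set \<Rightarrow> 'a set" where
  "conj_action G \<equiv> \<lambda>g. \<lambda>K \<in> {K. K \<subseteq> carrier G}. g <#\<^bsub>G\<^esub> K #>\<^bsub>G\<^esub> inv\<^bsub>G\<^esub> g"

context group
begin

lemma inv_mult_cancel_left [simp]:
  "x \<in> carrier G \<Longrightarrow> y \<in> carrier G \<Longrightarrow> inv x \<otimes> (x \<otimes> y) = y"
  by (simp add: m_assoc[symmetric])

lemma mult_inv_cancel_left [simp]:
  "x \<in> carrier G \<Longrightarrow> y \<in> carrier G \<Longrightarrow> x \<otimes> (inv x \<otimes> y) = y"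
  by (simp add: m_assoc[symmetric])

lemma commutator_closed [simp]:
  "a \<in> carrier G \<Longrightarrow> b \<in> carrier G \<Longrightarrow> commutator G a b \<in> carrier G"
  by (simp add: commutator_def)

lemma conj_eq_mult_commutator:
  "a \<in> carrier G \<Longrightarrow> g \<in> carrier G \<Longrightarrow> inv g \<otimes> a \<otimes> g = a \<otimes> commutator G a g"
  by (simp add: commutator_def m_assoc[symmetric])

lemma commutator_eq_one_iff:
  assumes "a \<in> carrier G" "b \<in> carrier G"
  shows "commutator G a b = \<one> \<longleftrightarrow> a \<otimes> b = b \<otimes> a"
proof -
  have "commutator G a b = inv (b \<otimes> a) \<otimes> (a \<otimes> b)"
    using assms by (simp add: commutator_def inv_mult_group m_assoc)
  then show ?thesis
    using assms inv_solve_left'[of \<one> "b \<otimes> a" "a \<otimes> b"] by auto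
qed

lemma inv_commutator:
  "a \<in> carrier G \<Longrightarrow> b \<in> carrier G \<Longrightarrow> inv (commutator G a b) = commutator G b a"
  by (simp add: commutator_def inv_mult_group m_assoc)

lemma commutator_mult_left:
  "a \<in> carrier G \<Longrightarrow> b \<in> carrier G \<Longrightarrow> g \<in> carrier G \<Longrightarrow>
    commutator G (a \<otimes> b) g = inv b \<otimes> commutator G a g \<otimes> b \<otimes> commutator G b g"
  by (simp add: commutator_def inv_mult_group m_assoc)

lemma commutator_inv_left:
  "a \<in> carrier G \<Longrightarrow> g \<in> carrier G \<Longrightarrow>
    commutator G (inv a) g = a \<otimes> inv (commutator G a g) \<otimes> inv a"
  by (simp add: commutator_def inv_mult_group m_assoc)

lemma commutator_conj:
  "a \<in> carrier G \<Longrightarrow> b \<in> carrier G \<Longrightarrow> c \<in> carrier G \<Longrightarrow>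
    c \<otimes> commutator G a b \<otimes> inv c = commutator G (c \<otimes> a \<otimes> inv c) (c \<otimes> b \<otimes> inv c)"
  by (simp add: commutator_def m_assoc inv_mult_group)

lemma nat_pow_conj:
  assumes "a \<in> carrier G" "c \<in> carrier G"
  shows "(c \<otimes> a \<otimes> inv c) [^] (k::nat) = c \<otimes> a [^] k \<otimes> inv c"
proof (induction k)
  case 0
  then show ?case using assms by simp
next
  case (Suc k)
  then show ?case using assms by (simp add: m_assoc)
qed

lemma nat_pow_mult_class_two:
  assumes carr: "x \<in> carrier G" "y \<in> carrier G" "c \<in> carrier G"
    and yx: "y \<otimes> x = x \<otimes> y \<otimes> c" and cx: "c \<otimes> x = x \<otimes> c" and cy: "c \<otimes> y = y \<otimes> c"
  shows "(x \<otimes> y) [^] (k::nat) = x [^] k \<otimes> y [^] k \<otimes> c [^] (k choose 2)"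
proof (induction k)
  case 0
  then show ?case using carr by (simp add: numeral_2_eq_2)
next
  case (Suc k)
  have y_pow_x: "y [^] n \<otimes> x = x \<otimes> y [^] n \<otimes> c [^] n" for n :: nat
  proof (induction n)
    case 0
    then show ?case using carr by simp
  next
    case (Suc n)
    have "y [^] Suc n \<otimes> x = y [^] n \<otimes> (y \<otimes> x)"
      using carr by (simp add: m_assoc)
    also have "\<dots> = (y [^] n \<otimes> x) \<otimes> (y \<otimes> c)"
      using carr by (simp add: yx m_assoc)
    also have "\<dots> = x \<otimes> y [^] n \<otimes> (c [^] n \<otimes> y) \<otimes> c"
      using carr by (simp add: Suc m_assoc)
    also have "c [^] n \<otimes> y = y \<otimes> c [^] n"
      using carr cy by (simp add: group_commutes_pow)
    finally show ?case
      using carr by (simp add: m_assoc)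
  qed
  have cs_x: "c [^] (k choose 2) \<otimes> x = x \<otimes> c [^] (k choose 2)"
    using carr cx by (simp add: group_commutes_pow)
  have cs_y: "c [^] (k + (k choose 2)) \<otimes> y = y \<otimes> c [^] (k + (k choose 2))"
    using carr cy by (simp add: group_commutes_pow)
  have "(x \<otimes> y) [^] Suc k = x [^] k \<otimes> y [^] k \<otimes> (c [^] (k choose 2) \<otimes> x) \<otimes> y"
    using carr Suc by (simp add: m_assoc)
  also have "\<dots> = x [^] k \<otimes> (y [^] k \<otimes> x) \<otimes> c [^] (k choose 2) \<otimes> y"
    unfolding cs_x using carr by (simp add: m_assoc)
  also have "\<dots> = x [^] Suc k \<otimes> y [^] k \<otimes> (c [^] (k + (k choose 2)) \<otimes> y)"
    unfolding y_pow_x using carr by (simp add: m_assoc nat_pow_mult)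
  also have "\<dots> = x [^] Suc k \<otimes> y [^] Suc k \<otimes> c [^] (Suc k choose 2)"
    unfolding cs_y using carr by (simp add: m_assoc numeral_2_eq_2)
  finally show ?case .
qed

lemma commutator_nat_pow_right:
  assumes a: "a \<in> carrier G" and g: "g \<in> carrier G"
    and ca: "commutator G a g \<otimes> a = a \<otimes> commutator G a g"
    and cg: "commutator G a g \<otimes> g = g \<otimes> commutator G a g"
  shows "commutator G a (g [^] (k::nat)) = commutator G a g [^] k"
proof -
  let ?c = "commutator G a g"
  have conj: "inv (g [^] n) \<otimes> a \<otimes> g [^] n = a \<otimes> ?c [^] n" for n :: nat
  proof (induction n)
    case 0
    then show ?case using a by simp
  next
    case (Suc n)
    have "inv (g [^] Suc n) \<otimes> a \<otimes> g [^] Suc n = inv g \<otimes> (inv (g [^] n) \<otimes> a \<otimes> g [^] n) \<otimes> g"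
      using a g by (simp add: m_assoc inv_mult_group)
    also have "\<dots> = (inv g \<otimes> a \<otimes> g) \<otimes> (inv g \<otimes> ?c [^] n \<otimes> g)"
      using a g Suc by (simp add: m_assoc)
    also have "inv g \<otimes> ?c [^] n \<otimes> g = ?c [^] n"
      using a g cg by (simp add: group_commutes_pow m_assoc)
    also have "inv g \<otimes> a \<otimes> g = a \<otimes> ?c"
      by (rule conj_eq_mult_commutator[OF a g])
    also have "a \<otimes> ?c \<otimes> ?c [^] n = a \<otimes> ?c [^] Suc n"
      using a g by (metis commutator_closed m_assoc nat_pow_Suc2 nat_pow_closed)
    finally show ?case .
  qed
  have "commutator G a (g [^] k) = inv a \<otimes> (inv (g [^] k) \<otimes> a \<otimes> g [^] k)"
    using a g by (simp add: commutator_def m_assoc)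
  then show ?thesis
    using a g by (simp add: conj)
qed

lemma commutator_nat_pow_left_eq_one:
  fixes p :: nat
  assumes x: "x \<in> carrier G" and g: "g \<in> carrier G" and "odd p"
    and y: "y = commutator G x g" and c: "c = commutator G y x"
    and cx: "c \<otimes> x = x \<otimes> c" and cy: "c \<otimes> y = y \<otimes> c"
    and yp: "y [^] p = \<one>" and cp: "c [^] p = \<one>"
  shows "commutator G (x [^] p) g = \<one>"
proof -
  have carr: "y \<in> carrier G" "c \<in> carrier G"
    using x g y c by simp_all
  have "y \<otimes> x = x \<otimes> (inv x \<otimes> y \<otimes> x)"
    using x carr by (simp add: m_assoc)
  also have "inv x \<otimes> y \<otimes> x = y \<otimes> c"
    using conj_eq_mult_commutator[OF carr(1) x] c by simp
  finally have yx: "y \<otimes> x = x \<otimes> y \<otimes> c"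
    using x carr by (simp add: m_assoc)
  obtain m where m: "p = 2 * m + 1"
    using \<open>odd p\<close> oddE by blast
  have "p choose 2 = p * (p - 1) div 2"
    by (rule choose_two)
  also have "\<dots> = p * m"
    using m by simp
  finally have "c [^] (p choose 2) = (c [^] p) [^] m"
    using carr by (simp add: nat_pow_pow)
  then have c_choose: "c [^] (p choose 2) = \<one>"
    using cp by simp
  have "inv g \<otimes> x [^] p \<otimes> g = (inv g \<otimes> x \<otimes> g) [^] p"
    using x g nat_pow_conj[of x "inv g" p] by simp
  also have "\<dots> = (x \<otimes> y) [^] p"
    using x g y conj_eq_mult_commutator by simp
  also have "\<dots> = x [^] p"
    using x carr yp c_choose nat_pow_mult_class_two[OF x carr yx cx cy] by simp
  finally have "inv g \<otimes> x [^] p \<otimes> g = x [^] p" .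
  then show ?thesis
    using x g conj_eq_mult_commutator[of "x [^] p" g] by simp
qed

lemma commutator_mem_sym:
  assumes "subgroup H G" "a \<in> carrier G" "b \<in> carrier G"
  shows "commutator G a b \<in> H \<longleftrightarrow> commutator G b a \<in> H"
  using assms subgroup.m_inv_closed[OF assms(1), of "commutator G a b"]
    subgroup.m_inv_closed[OF assms(1), of "commutator G b a"]
  by (auto simp: inv_commutator)

lemma commutator_generate_mem:
  assumes H: "H \<lhd> G" and S: "S \<subseteq> carrier G" and g: "g \<in> carrier G"
    and gens: "\<And>s. s \<in> S \<Longrightarrow> commutator G s g \<in> H" and x: "x \<in> generate G S"
  shows "commutator G x g \<in> H"
  using x
proof (induction x rule: generate.induct)
  interpret H: normal H G by (rule H)
  case one
  then show ?case
    using g by (simp add: commutator_def)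
next
  case (incl h)
  then show ?case by (rule gens)
next
  interpret H: normal H G by (rule H)
  case (inv h)
  then have "h \<in> carrier G"
    using S by blast
  then show ?case
    using g gens[OF inv.hyps] by (simp add: commutator_inv_left H.inv_op_closed2)
next
  interpret H: normal H G by (rule H)
  case (eng h1 h2)
  have "h1 \<in> carrier G" "h2 \<in> carrier G"
    using generate_in_carrier[OF S] eng.hyps by auto
  then show ?case
    using g eng.IH by (simp add: commutator_mult_left H.inv_op_closed1)
qed

lemma commutator_pth_powers_mem:
  assumes H: "H \<lhd> G" and g: "g \<in> carrier G"
    and pow: "\<And>x. x \<in> carrier G \<Longrightarrow> commutator G (x [^] p) g \<in> H" and u: "u \<in> pth_powers G p"
  shows "commutator G u g \<in> H"
proof (rule commutator_generate_mem[OF H _ g])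
  show "{x [^] p | x. x \<in> carrier G} \<subseteq> carrier G"
    by auto
  show "u \<in> generate G {x [^] p | x. x \<in> carrier G}"
    using u unfolding pth_powers_def .
next
  fix s assume "s \<in> {x [^] p | x. x \<in> carrier G}"
  then obtain x where "x \<in> carrier G" "s = x [^] p"
    by blast
  then show "commutator G s g \<in> H"
    using pow by simp
qed

lemma center_mod_normal:
  assumes H: "H \<lhd> G"
  shows "center_mod G H \<lhd> G"
proof -
  interpret H: normal H G by (rule H)
  have sub: "subgroup (center_mod G H) G"
  proof (rule subgroupI)
    show "center_mod G H \<subseteq> carrier G"
      unfolding center_mod_def by blast
    show "center_mod G H \<noteq> {}"
      unfolding center_mod_def by (auto simp: commutator_def intro!: exI[of _ \<one>])
  next
    fix a assume "a \<in> center_mod G H"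
    then show "inv a \<in> center_mod G H"
      unfolding center_mod_def by (simp add: commutator_inv_left H.inv_op_closed2)
  next
    fix a b assume "a \<in> center_mod G H" "b \<in> center_mod G H"
    then show "a \<otimes> b \<in> center_mod G H"
      unfolding center_mod_def by (simp add: commutator_mult_left H.inv_op_closed1)
  qed
  have "x \<otimes> a \<otimes> inv x \<in> center_mod G H" if x: "x \<in> carrier G" and a: "a \<in> center_mod G H" for x a
  proof -
    have "commutator G (x \<otimes> a \<otimes> inv x) g \<in> H" if g: "g \<in> carrier G" for g
    proof -
      have "commutator G a (inv x \<otimes> g \<otimes> x) \<in> H"
        using a x g unfolding center_mod_def by simp
      then have "x \<otimes> commutator G a (inv x \<otimes> g \<otimes> x) \<otimes> inv x \<in> H"
        using x H.inv_op_closed2 by simp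
      then show ?thesis
        using a x g commutator_conj[of a "inv x \<otimes> g \<otimes> x" x]
        unfolding center_mod_def by (simp add: m_assoc)
    qed
    then show ?thesis
      using x a unfolding center_mod_def by simp
  qed
  then show ?thesis
    using sub by (simp add: normal_inv_iff)
qed

lemma normal_subset_center_mod:
  assumes "H \<lhd> G"
  shows "H \<subseteq> center_mod G H"
proof
  interpret H: normal H G by (rule assms)
  fix h assume h: "h \<in> H"
  have "commutator G h g \<in> H" if g: "g \<in> carrier G" for g
  proof -
    have "commutator G h g = inv h \<otimes> (inv g \<otimes> h \<otimes> g)"
      using h g by (simp add: commutator_def m_assoc)
    then show ?thesis
      using h g by (simp add: H.inv_op_closed1)
  qed
  then show "h \<in> center_mod G H"
    using h unfolding center_mod_def by auto
qed

lemma center_eq_center_mod_one: "center G = center_mod G {\<one>}"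
  unfolding center_def center_mod_def using commutator_eq_one_iff by auto

lemma center_normal: "center G \<lhd> G"
  unfolding center_eq_center_mod_one by (rule center_mod_normal[OF one_is_normal])

lemma center_subset_center_mod:
  assumes "subgroup H G"
  shows "center G \<subseteq> center_mod G H"
  using assms subgroup.one_closed unfolding center_eq_center_mod_one center_mod_def by auto

lemma generate_nat_pow_normal:
  assumes "H \<lhd> G"
  shows "generate G {x [^] (k::nat) | x. x \<in> H} \<lhd> G"
proof (rule normal_generateI)
  show "{x [^] k | x. x \<in> H} \<subseteq> carrier G"
    using assms normal_imp_subgroup subgroup.subset by blast
next
  fix s g assume "s \<in> {x [^] k | x. x \<in> H}" and g: "g \<in> carrier G"
  then obtain x where x: "x \<in> H" "s = x [^] k" by blast
  have "x \<in> carrier G"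
    using x assms normal_imp_subgroup subgroup.subset by blast
  then have "g \<otimes> s \<otimes> inv g = (g \<otimes> x \<otimes> inv g) [^] k"
    using nat_pow_conj g x by simp
  moreover have "g \<otimes> x \<otimes> inv g \<in> H"
    using normal.inv_op_closed2[OF assms g x(1)] .
  ultimately show "g \<otimes> s \<otimes> inv g \<in> {x [^] k | x. x \<in> H}" by blast
qed

lemma pth_powers_normal: "pth_powers G p \<lhd> G"
  unfolding pth_powers_def by (rule generate_nat_pow_normal[OF normal_self])

lemma subgroup_nat_pow_closed: "subgroup H G \<Longrightarrow> h \<in> H \<Longrightarrow> h [^] (n::nat) \<in> H"
  using subgroup_int_pow_closed[of H h "int n"] by (simp add: int_pow_int)

lemma commutator_mult_center_left:
  assumes a: "a \<in> carrier G" and z: "z \<in> center G" and g: "g \<in> carrier G"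
  shows "commutator G (a \<otimes> z) g = commutator G a g"
proof -
  have zG: "z \<in> carrier G" and "commutator G z g = \<one>"
    using z g unfolding center_eq_center_mod_one center_mod_def by auto
  moreover have "commutator G a g \<otimes> z = z \<otimes> commutator G a g"
    using z a g unfolding center_def by simp
  ultimately show ?thesis
    using a g by (simp add: commutator_mult_left m_assoc)
qed

lemma derived_subset_of_commutators:
  assumes H: "subgroup H G" and K: "subgroup K G"
    and comm: "\<And>a b. a \<in> H \<Longrightarrow> b \<in> H \<Longrightarrow> commutator G a b \<in> K"
  shows "derived G H \<subseteq> K"
  unfolding derived_def
proof (rule generate_subgroup_incl[OF _ K], rule subsetI)
  fix s assume "s \<in> derived_set G H"
  then obtain a b where ab: "a \<in> H" "b \<in> H" and s: "s = a \<otimes> b \<otimes> inv a \<otimes> inv b"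
    by blast
  have "s = commutator G (inv a) (inv b)"
    using ab s H by (simp add: commutator_def subgroup.mem_carrier)
  then show "s \<in> K"
    using comm[OF subgroup.m_inv_closed[OF H ab(1)] subgroup.m_inv_closed[OF H ab(2)]] by simp
qed

lemma commutator_mem_derived:
  assumes H: "subgroup H G" and a: "a \<in> H" and b: "b \<in> H"
  shows "commutator G a b \<in> derived G H"
  unfolding derived_def
proof (rule generate.incl, rule UN_I[of "inv a"], rule_tac [2] UN_I[of "inv b"])
  show "commutator G a b \<in> {inv a \<otimes> inv b \<otimes> inv (inv a) \<otimes> inv (inv b)}"
    using H a b by (simp add: commutator_def subgroup.mem_carrier)
qed (use subgroup.m_inv_closed[OF H] a b in simp_all)

lemma powerful_subgroup_iff:
  assumes H: "subgroup H G"
  shows "powerful (G\<lparr>carrier := H\<rparr>) p \<longleftrightarrow> derived G H \<subseteq> generate G {x [^] p | x. x \<in> H}"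
proof -
  have "{x [^]\<^bsub>G\<lparr>carrier := H\<rparr>\<^esub> p | x. x \<in> carrier (G\<lparr>carrier := H\<rparr>)} = {x [^] p | x. x \<in> H}"
    using nat_pow_consistent by simp
  moreover have "{x [^] p | x. x \<in> H} \<subseteq> H"
    using subgroup_nat_pow_closed[OF H] by auto
  ultimately have "pth_powers (G\<lparr>carrier := H\<rparr>) p = generate G {x [^] p | x. x \<in> H}"
    unfolding pth_powers_def using generate_consistent[OF _ H] by simp
  then show ?thesis
    unfolding powerful_def using derived_consistent[OF subset_refl H] by simp
qed

lemma normal_generate_Un_normal:
  assumes S: "S \<subseteq> carrier G" and conj: "\<And>s g. s \<in> S \<Longrightarrow> g \<in> carrier G \<Longrightarrow> g \<otimes> s \<otimes> inv g \<in> S"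
    and K: "K \<lhd> G"
  shows "generate G (S \<union> K) \<lhd> G"
proof (rule normal_generateI)
  interpret K: normal K G by (rule K)
  show "S \<union> K \<subseteq> carrier G"
    using S K.subset by simp
  fix s g assume "s \<in> S \<union> K" "g \<in> carrier G"
  then show "g \<otimes> s \<otimes> inv g \<in> S \<union> K"
    using conj K.inv_op_closed2 by auto
qed

lemma normal_generate_commutators_Un:
  assumes N: "N \<lhd> G" and K: "K \<lhd> G"
  shows "generate G ({commutator G u g | u g. u \<in> N \<and> g \<in> carrier G} \<union> K) \<lhd> G"
proof (rule normal_generate_Un_normal[OF _ _ K])
  interpret N: normal N G by (rule N)
  show "{commutator G u g | u g. u \<in> N \<and> g \<in> carrier G} \<subseteq> carrier G"
    by auto
  fix c h assume "c \<in> {commutator G u g | u g. u \<in> N \<and> g \<in> carrier G}" and h: "h \<in> carrier G"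
  then obtain u g where ug: "u \<in> N" "g \<in> carrier G" and c: "c = commutator G u g"
    by blast
  have "h \<otimes> c \<otimes> inv h = commutator G (h \<otimes> u \<otimes> inv h) (h \<otimes> g \<otimes> inv h)"
    unfolding c by (rule commutator_conj[OF N.mem_carrier[OF ug(1)] ug(2) h])
  moreover have "h \<otimes> u \<otimes> inv h \<in> N"
    by (rule N.inv_op_closed2[OF h ug(1)])
  ultimately show "h \<otimes> c \<otimes> inv h \<in> {commutator G u g | u g. u \<in> N \<and> g \<in> carrier G}"
    using ug h by blast
qed

end

lemma (in group_hom) hom_commutator:
  "a \<in> carrier G \<Longrightarrow> b \<in> carrier G \<Longrightarrow> h (commutator G a b) = commutator H (h a) (h b)"
  by (simp add: commutator_def)

context normal
begin

lemma group_hom_rcos: "group_hom G (G Mod H) (\<lambda>a. H #> a)"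
  using r_coset_hom_Mod factorgroup_is_group is_group
  by (simp add: group_hom_def group_hom_axioms_def)

lemma rcos_eq_one_iff: "a \<in> carrier G \<Longrightarrow> H #> a = \<one>\<^bsub>G Mod H\<^esub> \<longleftrightarrow> a \<in> H"
  using coset_join1[of H a] coset_join2[of a H] subgroup_axioms by auto

lemma commutator_mem_iff_rcos_commute:
  assumes "a \<in> carrier G" "b \<in> carrier G"
  shows "commutator G a b \<in> H \<longleftrightarrow>
    (H #> a) \<otimes>\<^bsub>G Mod H\<^esub> (H #> b) = (H #> b) \<otimes>\<^bsub>G Mod H\<^esub> (H #> a)"
proof -
  interpret Q: group "G Mod H" by (rule factorgroup_is_group)
  interpret \<pi>: group_hom G "G Mod H" "\<lambda>a. H #> a" by (rule group_hom_rcos)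
  have "commutator G a b \<in> H \<longleftrightarrow> commutator (G Mod H) (H #> a) (H #> b) = \<one>\<^bsub>G Mod H\<^esub>"
    using assms rcos_eq_one_iff by (simp add: \<pi>.hom_commutator[symmetric])
  then show ?thesis
    using assms Q.commutator_eq_one_iff by simp
qed

lemma commutator_mem_of_rcos_conj_eq:
  assumes a: "a \<in> carrier G" and g: "g \<in> carrier G"
    and conj: "H #> (inv g \<otimes> a \<otimes> g) = H #> a"
  shows "commutator G a g \<in> H"
proof -
  interpret Q: group "G Mod H" by (rule factorgroup_is_group)
  interpret \<pi>: group_hom G "G Mod H" "\<lambda>a. H #> a" by (rule group_hom_rcos)
  have "(H #> a) \<otimes>\<^bsub>G Mod H\<^esub> (H #> commutator G a g) = H #> a"
    using a g conj conj_eq_mult_commutator by simp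
  then have "H #> commutator G a g = \<one>\<^bsub>G Mod H\<^esub>"
    using a g Q.l_cancel_one[of "H #> a" "H #> commutator G a g"] by simp
  then show ?thesis
    using a g rcos_eq_one_iff by simp
qed

lemma commutator_nat_pow_right_mem:
  assumes a: "a \<in> carrier G" and g: "g \<in> carrier G"
    and central: "commutator G a g \<in> center_mod G H" and pow: "commutator G a g [^] k \<in> H"
  shows "commutator G a (g [^] (k::nat)) \<in> H"
proof -
  interpret Q: group "G Mod H" by (rule factorgroup_is_group)
  interpret \<pi>: group_hom G "G Mod H" "\<lambda>a. H #> a" by (rule group_hom_rcos)
  let ?c = "commutator G a g"
  have commutes: "(H #> ?c) \<otimes>\<^bsub>G Mod H\<^esub> (H #> x) = (H #> x) \<otimes>\<^bsub>G Mod H\<^esub> (H #> ?c)"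
    if "x \<in> carrier G" for x
    using that a g central commutator_mem_iff_rcos_commute unfolding center_mod_def by simp
  have "H #> commutator G a (g [^] k) = commutator (G Mod H) (H #> a) ((H #> g) [^]\<^bsub>G Mod H\<^esub> k)"
    using a g by (simp add: \<pi>.hom_commutator \<pi>.hom_nat_pow)
  also have "\<dots> = commutator (G Mod H) (H #> a) (H #> g) [^]\<^bsub>G Mod H\<^esub> k"
    using a g commutes Q.commutator_nat_pow_right by (simp add: \<pi>.hom_commutator[symmetric])
  also have "\<dots> = H #> (?c [^] k)"
    using a g by (simp add: \<pi>.hom_commutator \<pi>.hom_nat_pow)
  finally show ?thesis
    using a g pow rcos_eq_one_iff[of "?c [^] k"] rcos_eq_one_iff[of "commutator G a (g [^] k)"]
    by simp
qed

lemma commutator_nat_pow_left_mem: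
  fixes p :: nat
  assumes "odd p" and x: "x \<in> carrier G" and g: "g \<in> carrier G"
    and central: "commutator G (commutator G x g) x \<in> center_mod G H"
    and y_pow: "commutator G x g [^] p \<in> H"
    and c_pow: "commutator G (commutator G x g) x [^] p \<in> H"
  shows "commutator G (x [^] p) g \<in> H"
proof -
  interpret Q: group "G Mod H" by (rule factorgroup_is_group)
  interpret \<pi>: group_hom G "G Mod H" "\<lambda>a. H #> a" by (rule group_hom_rcos)
  let ?y = "commutator G x g" and ?c = "commutator G (commutator G x g) x"
  have commutes: "(H #> ?c) \<otimes>\<^bsub>G Mod H\<^esub> (H #> z) = (H #> z) \<otimes>\<^bsub>G Mod H\<^esub> (H #> ?c)"
    if "z \<in> carrier G" for z
    using that x g central commutator_mem_iff_rcos_commute unfolding center_mod_def by simp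
  have "commutator (G Mod H) ((H #> x) [^]\<^bsub>G Mod H\<^esub> p) (H #> g) = \<one>\<^bsub>G Mod H\<^esub>"
  proof (rule Q.commutator_nat_pow_left_eq_one[of _ _ p "H #> ?y" "H #> ?c"])
    show "H #> ?y = commutator (G Mod H) (H #> x) (H #> g)"
      and "H #> ?c = commutator (G Mod H) (H #> ?y) (H #> x)"
      using x g by (simp_all add: \<pi>.hom_commutator)
    show "(H #> ?y) [^]\<^bsub>G Mod H\<^esub> p = \<one>\<^bsub>G Mod H\<^esub>"
      and "(H #> ?c) [^]\<^bsub>G Mod H\<^esub> p = \<one>\<^bsub>G Mod H\<^esub>"
      using x g y_pow c_pow rcos_eq_one_iff by (simp_all add: \<pi>.hom_nat_pow[symmetric])
  qed (use x g commutes \<open>odd p\<close> in simp_all)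
  then show ?thesis
    using x g rcos_eq_one_iff by (simp add: \<pi>.hom_commutator[symmetric] \<pi>.hom_nat_pow[symmetric])
qed

lemma pth_powers_FactGroup: "pth_powers (G Mod H) p = (\<lambda>a. H #> a) ` pth_powers G p"
proof -
  interpret \<pi>: group_hom G "G Mod H" "\<lambda>a. H #> a" by (rule group_hom_rcos)
  have "{C [^]\<^bsub>G Mod H\<^esub> p | C. C \<in> carrier (G Mod H)} = (\<lambda>a. H #> a) ` {g [^] p | g. g \<in> carrier G}"
    unfolding carrier_FactGroup Setcompr_eq_image image_image
    by (intro image_cong refl) (simp add: \<pi>.hom_nat_pow)
  then show ?thesis
    unfolding pth_powers_def using \<pi>.generate_img[of "{g [^] p | g. g \<in> carrier G}"] by auto
qed

lemma orbit_conj_action_rcos: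
  assumes a: "a \<in> carrier G"
  shows "orbit G (conj_action G) (H #> a) = {H #> (g \<otimes> a \<otimes> inv g) | g. g \<in> carrier G}"
proof -
  have "g <# (H #> a) #> inv g = H #> (g \<otimes> a \<otimes> inv g)" if g: "g \<in> carrier G" for g
  proof -
    have "g <# (H #> a) #> inv g = (g <# H) #> a #> inv g"
      using a g coset_assoc[OF g a subset] by simp
    also have "g <# H = H #> g"
      using coset_eq g by simp
    also have "(H #> g) #> a #> inv g = H #> (g \<otimes> a \<otimes> inv g)"
      using a g subset by (simp add: coset_mult_assoc)
    finally show ?thesis .
  qed
  moreover have "H #> a \<subseteq> carrier G"
    using a subset r_coset_subset_G by blast
  ultimately show ?thesis
    unfolding orbit_def by auto
qed

lemma orbit_conj_action_self: "orbit G (conj_action G) H = {H}"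
proof (intro equalityI subsetI)
  fix K assume "K \<in> orbit G (conj_action G) H"
  then obtain g where "g \<in> carrier G" "K = H #> (g \<otimes> \<one> \<otimes> inv g)"
    using orbit_conj_action_rcos[of \<one>] subset by auto
  then show "K \<in> {H}"
    using subset by simp
next
  fix K assume "K \<in> {H}"
  then show "K \<in> orbit G (conj_action G) H"
    using group_action.orbit_refl[OF action_by_conjugation_on_power_set] subset by blast
qed

lemma orbit_conj_action_nontrivial_rcos:
  assumes A: "A \<lhd> G" and y: "y \<in> (\<lambda>a. H #> a) ` A - {H}"
  shows "orbit G (conj_action G) y \<subseteq> (\<lambda>a. H #> a) ` A - {H}"
proof -
  interpret A: normal A G by (rule A)
  interpret conj: group_action G "{K. K \<subseteq> carrier G}" "conj_action G"
    by (rule action_by_conjugation_on_power_set)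
  obtain a where a: "a \<in> A" and ya: "y = H #> a"
    using y by blast
  have aG: "a \<in> carrier G"
    by (rule A.mem_carrier[OF a])
  have "orbit G (conj_action G) y \<subseteq> (\<lambda>a. H #> a) ` A"
    unfolding ya orbit_conj_action_rcos[OF aG]
  proof (rule subsetI)
    fix K assume "K \<in> {H #> (g \<otimes> a \<otimes> inv g) | g. g \<in> carrier G}"
    then obtain g where g: "g \<in> carrier G" and K: "K = H #> (g \<otimes> a \<otimes> inv g)"
      by blast
    have "g \<otimes> a \<otimes> inv g \<in> A"
      by (rule A.inv_op_closed2[OF g a])
    then show "K \<in> (\<lambda>a. H #> a) ` A"
      unfolding K by (rule imageI)
  qed
  moreover have "H \<notin> orbit G (conj_action G) y"
  proof
    assume "H \<in> orbit G (conj_action G) y"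
    moreover have "y \<in> {K. K \<subseteq> carrier G}"
      using ya aG subset r_coset_subset_G by simp
    ultimately have "y \<in> orbit G (conj_action G) H"
      using conj.orbit_sym subset by simp
    then show False
      using orbit_conj_action_self y by simp
  qed
  ultimately show ?thesis
    by blast
qed

lemma rcos_conj_fixed_imp_center_mod:
  assumes a: "a \<in> carrier G" and fixed: "orbit G (conj_action G) (H #> a) = {H #> a}"
  shows "a \<in> center_mod G H"
proof -
  have "commutator G a g \<in> H" if g: "g \<in> carrier G" for g
  proof (rule commutator_mem_of_rcos_conj_eq[OF a g])
    have "H #> (inv g \<otimes> a \<otimes> inv (inv g)) \<in> {H #> a}"
      unfolding fixed[symmetric] orbit_conj_action_rcos[OF a] using g by blast
    then show "H #> (inv g \<otimes> a \<otimes> g) = H #> a"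
      using g by simp
  qed
  then show ?thesis
    using a unfolding center_mod_def by blast
qed

end

lemma (in group) quasi_powerful_commutator:
  assumes qp: "quasi_powerful G p" and x: "x \<in> carrier G" and y: "y \<in> carrier G"
  shows "\<exists>u \<in> pth_powers G p. \<exists>z \<in> center G. commutator G x y = u \<otimes> z"
proof -
  let ?Z = "center G"
  interpret Z: normal ?Z G by (rule center_normal)
  interpret Q: group "G Mod ?Z" by (rule Z.factorgroup_is_group)
  interpret \<pi>: group_hom G "G Mod ?Z" "\<lambda>a. ?Z #> a" by (rule Z.group_hom_rcos)
  have "derived (G Mod ?Z) (carrier (G Mod ?Z)) = (\<lambda>a. ?Z #> a) ` derived G (carrier G)"
    unfolding carrier_FactGroup by (rule \<pi>.derived_img) simp
  then have "(\<lambda>a. ?Z #> a) ` derived G (carrier G) \<subseteq> (\<lambda>a. ?Z #> a) ` pth_powers G p"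
    using qp unfolding quasi_powerful_def powerful_def Z.pth_powers_FactGroup by simp
  then have "?Z #> commutator G x y \<in> (\<lambda>a. ?Z #> a) ` pth_powers G p"
    using commutator_mem_derived[OF subgroup_self x y] by blast
  then obtain u where u: "u \<in> pth_powers G p" and eq: "?Z #> commutator G x y = ?Z #> u"
    by (rule imageE)
  have uG: "u \<in> carrier G"
    by (rule subgroup.mem_carrier[OF normal_imp_subgroup[OF pth_powers_normal] u])
  have "?Z #> (commutator G x y \<otimes> inv u) = \<one>\<^bsub>G Mod ?Z\<^esub>"
    using x y uG eq Q.r_inv[of "?Z #> u"] by simp
  then have z: "commutator G x y \<otimes> inv u \<in> ?Z"
    using x y uG Z.rcos_eq_one_iff[of "commutator G x y \<otimes> inv u"] by (simp only:) simp
  have "commutator G x y = (commutator G x y \<otimes> inv u) \<otimes> u"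
    using x y uG by (simp add: m_assoc)
  also have "\<dots> = u \<otimes> (commutator G x y \<otimes> inv u)"
    using z uG unfolding center_def by auto
  finally show ?thesis
    using u z by blast
qed

locale finite_p_group = group G for G (structure) +
  fixes p :: nat
  assumes prime_p: "Factorial_Ring.prime p" and p_group: "p_group G p"
begin

lemma finite_carrier: "finite (carrier G)"
  using p_group unfolding p_group_def by blast

lemma dvd_order_imp_prime_power: "d dvd order G \<Longrightarrow> \<exists>i. d = p ^ i"
  using p_group divides_primepow_nat[OF prime_p] unfolding p_group_def by auto

lemma p_dvd_card_fixed_point_free:
  assumes act: "group_action G E \<phi>" and Y: "finite Y" "Y \<subseteq> E"
    and stable: "\<And>y. y \<in> Y \<Longrightarrow> orbit G \<phi> y \<subseteq> Y"
    and no_fixed: "\<And>y. y \<in> Y \<Longrightarrow> orbit G \<phi> y \<noteq> {y}"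
  shows "p dvd card Y"
proof -
  interpret group_action G E \<phi> by (rule act)
  have p_dvd_orbit: "p dvd card (orbit G \<phi> y)" if y: "y \<in> Y" for y
  proof -
    have yE: "y \<in> E"
      using y Y(2) by blast
    have "card (orbit G \<phi> y) dvd order G"
      unfolding orbit_stabilizer_theorem[OF yE, symmetric] by simp
    then obtain k where k: "card (orbit G \<phi> y) = p ^ k"
      using dvd_order_imp_prime_power by blast
    have "k \<noteq> 0"
    proof
      assume "k = 0"
      then obtain z where "orbit G \<phi> y = {z}"
        using k card_1_singletonE by auto
      then show False
        using orbit_refl[OF yE] no_fixed[OF y] by auto
    qed
    then show ?thesis
      using k by simp
  qed
  have disj: "pairwise disjnt (orbit G \<phi> ` Y)"
  proof (rule pairwise_imageI)
    fix x y assume "x \<in> Y" "y \<in> Y" "orbit G \<phi> x \<noteq> orbit G \<phi> y"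
    then show "disjnt (orbit G \<phi> x) (orbit G \<phi> y)"
      using disjoint_union[of "orbit G \<phi> x" "orbit G \<phi> y"] Y(2)
      unfolding orbits_def disjnt_def by blast
  qed
  have fin: "finite orb" if "orb \<in> orbit G \<phi> ` Y" for orb
    using that Y(1) stable finite_subset by blast
  have "Y = \<Union> (orbit G \<phi> ` Y)"
    using orbit_refl Y(2) stable by blast
  then have "card Y = card (\<Union> (orbit G \<phi> ` Y))"
    by (rule arg_cong)
  also have "\<dots> = (\<Sum>orb \<in> orbit G \<phi> ` Y. card orb)"
    by (rule card_Union_disjoint[OF disj fin])
  finally show ?thesis
    using p_dvd_orbit by (auto intro: dvd_sum)
qed

lemma p_dvd_card_rcosets:
  assumes L: "subgroup L G" and A: "subgroup A G" and LA: "L \<subseteq> A" "L \<noteq> A"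
  shows "p dvd card ((\<lambda>a. L #> a) ` A)"
proof -
  let ?X = "(\<lambda>a. L #> a) ` A"
  interpret GA: group "G\<lparr>carrier := A\<rparr>"
    using A subgroup_imp_group by blast
  have "rcosets\<^bsub>G\<lparr>carrier := A\<rparr>\<^esub> L = ?X"
    by (auto simp: RCOSETS_def r_coset_def)
  then have index: "card ?X * card L = card A"
    using GA.lagrange[OF subgroup_incl[OF L A LA(1)]] by (simp add: order_def)
  obtain i where "card A = p ^ i"
    using dvd_order_imp_prime_power lagrange[OF A] by (metis dvd_triv_right)
  then obtain k where k: "card ?X = p ^ k"
    using index divides_primepow_nat[OF prime_p] by (metis dvd_triv_left)
  have "k \<noteq> 0"
  proof
    assume "k = 0"
    then have "card L = card A"
      using index k by simp
    moreover have "finite A"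
      using A finite_carrier subgroup.subset finite_subset by blast
    ultimately show False
      using LA card_subset_eq by blast
  qed
  then show ?thesis
    using k by simp
qed

lemma p_dvd_card_nontrivial_rcosets:
  assumes L: "L \<lhd> G" and A: "A \<lhd> G" and none: "\<And>a. a \<in> A - L \<Longrightarrow> a \<notin> center_mod G L"
  shows "p dvd card ((\<lambda>a. L #> a) ` A - {L})"
proof (rule p_dvd_card_fixed_point_free[OF action_by_conjugation_on_power_set])
  interpret L: normal L G by (rule L)
  interpret A: normal A G by (rule A)
  show "finite ((\<lambda>a. L #> a) ` A - {L})"
    using finite_subset[OF A.subset finite_carrier] by simp
  show "(\<lambda>a. L #> a) ` A - {L} \<subseteq> {K. K \<subseteq> carrier G}"
    using A.subset L.subset r_coset_subset_G by blast
next
  interpret L: normal L G by (rule L)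
  interpret A: normal A G by (rule A)
  fix y assume y: "y \<in> (\<lambda>a. L #> a) ` A - {L}"
  then show "orbit G (conj_action G) y \<subseteq> (\<lambda>a. L #> a) ` A - {L}"
    by (rule L.orbit_conj_action_nontrivial_rcos[OF A])
  from y obtain a where a: "a \<in> A" "y = L #> a" "L #> a \<noteq> L"
    by auto
  have aG: "a \<in> carrier G"
    by (rule A.mem_carrier[OF a(1)])
  show "orbit G (conj_action G) y \<noteq> {y}"
  proof
    assume "orbit G (conj_action G) y = {y}"
    then have "a \<in> center_mod G L"
      using L.rcos_conj_fixed_imp_center_mod aG a(2) by blast
    moreover have "a \<notin> L"
      using a(3) L.rcos_eq_one_iff[OF aG] by simp
    ultimately show False
      using none a(1) by blast
  qed
qed

text \<open>\<open>G\<close> acts by conjugation on the cosets of \<open>L\<close> in \<open>A\<close>, fixing \<open>L\<close>. Their number is a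
  proper power of \<open>p\<close>, so some coset \<open>L a \<noteq> L\<close> is fixed too, and then \<open>a\<close> is central
  modulo \<open>L\<close>.\<close>

lemma normal_psubset_meets_center_mod:
  assumes L: "L \<lhd> G" and A: "A \<lhd> G" and LA: "L \<subseteq> A" "L \<noteq> A"
  shows "\<exists>a \<in> A - L. a \<in> center_mod G L"
proof (rule ccontr)
  interpret L: normal L G by (rule L)
  interpret A: normal A G by (rule A)
  let ?X = "(\<lambda>a. L #> a) ` A"
  assume "\<not> ?thesis"
  then have "p dvd card (?X - {L})"
    using p_dvd_card_nontrivial_rcosets[OF L A] by blast
  moreover have "p dvd card ?X"
    using p_dvd_card_rcosets L.subgroup_axioms A.subgroup_axioms LA by blast
  moreover have "card ?X - card (?X - {L}) = 1"
  proof -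
    have "L \<in> ?X"
      using image_eqI[of L "\<lambda>a. L #> a" \<one> A] L.subset A.one_closed by simp
    moreover have "finite ?X"
      using finite_subset[OF A.subset finite_carrier] by simp
    ultimately have "card ?X > 0"
      by (auto simp: card_gt_0_iff)
    then show ?thesis
      using card_Diff_singleton[OF \<open>L \<in> ?X\<close>] by linarith
  qed
  ultimately have "p dvd 1"
    by (metis dvd_diff_nat)
  then show False
    using prime_p by simp
qed

lemma normal_psubset_central_step:
  assumes B: "B \<lhd> G" and A: "A \<lhd> G" and BA: "B \<subseteq> A" "B \<noteq> A"
  shows "\<exists>L. L \<lhd> G \<and> B \<subseteq> L \<and> L \<subseteq> A \<and> L \<noteq> A \<and> A \<subseteq> center_mod G L"
proof -
  let ?S = "{L. L \<lhd> G \<and> B \<subseteq> L \<and> L \<subseteq> A \<and> L \<noteq> A}"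
  have "?S \<subseteq> Pow (carrier G)"
    using subgroup.subset[OF normal_imp_subgroup[OF A]] by auto
  then have "finite ?S"
    by (rule finite_subset) (simp add: finite_carrier)
  moreover have "B \<in> ?S"
    using B BA by simp
  ultimately obtain L where L: "L \<in> ?S" and maximal: "\<And>L'. L' \<in> ?S \<Longrightarrow> L \<subseteq> L' \<Longrightarrow> L = L'"
    using finite_has_maximal[of ?S] by auto
  then have L_normal: "L \<lhd> G"
    by simp
  let ?L' = "A \<inter> center_mod G L"
  have "?L' \<lhd> G"
    by (rule normal_subgroup_intersect[OF A center_mod_normal[OF L_normal]])
  moreover have "L \<subseteq> ?L'"
    using L normal_subset_center_mod[OF L_normal] by simp
  moreover obtain a where "a \<in> A - L" "a \<in> center_mod G L"
    using normal_psubset_meets_center_mod[OF L_normal A] L by auto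
  ultimately have "A \<subseteq> center_mod G L"
    using maximal[of ?L'] L by auto
  then show ?thesis
    using L by auto
qed
end

locale quasi_powerful_p_group = finite_p_group +
  assumes odd_p: "odd p" and quasi_powerful: "quasi_powerful G p"
begin

abbreviation N where "N \<equiv> pth_powers G p"

abbreviation M where "M \<equiv> generate G {x [^] p | x. x \<in> N}"

lemma N_normal: "N \<lhd> G"
  by (rule pth_powers_normal)

lemma M_normal: "M \<lhd> G"
  by (rule generate_nat_pow_normal[OF N_normal])

lemma pth_power_mem_M: "x \<in> N \<Longrightarrow> x [^] p \<in> M"
  by (rule generate.incl) blast

lemma commutator_N_mem_N:
  assumes "u \<in> N" "g \<in> carrier G"
  shows "commutator G u g \<in> N"
proof -
  have "u \<in> center_mod G N"
    by (rule subsetD[OF normal_subset_center_mod[OF N_normal] assms(1)])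
  then show ?thesis
    using assms(2) unfolding center_mod_def by simp
qed

lemma commutator_pth_power_mem:
  assumes K: "K \<lhd> G" and MK: "M \<subseteq> K" and ZK: "center G \<subseteq> K"
    and central: "\<And>u g. u \<in> N \<Longrightarrow> g \<in> carrier G \<Longrightarrow> commutator G u g \<in> center_mod G K"
    and x: "x \<in> carrier G" and g: "g \<in> carrier G"
  shows "commutator G (x [^] p) g \<in> K"
proof -
  obtain n z where n: "n \<in> N" and z: "z \<in> center G" and y: "commutator G x g = n \<otimes> z"
    using quasi_powerful_commutator[OF quasi_powerful x g] by blast
  have nG: "n \<in> carrier G"
    by (rule subgroup.mem_carrier[OF normal_imp_subgroup[OF N_normal] n])
  have c: "commutator G (commutator G x g) x = commutator G n x"
    using nG z x by (simp add: y commutator_mult_center_left)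
  have "z \<otimes> n = n \<otimes> z" and "z \<in> carrier G"
    using z nG unfolding center_def by auto
  then have "commutator G x g [^] p = n [^] p \<otimes> z [^] p"
    using nG by (simp add: y pow_mult_distrib)
  moreover have "n [^] p \<in> K"
    by (rule subsetD[OF MK pth_power_mem_M[OF n]])
  moreover have "z [^] p \<in> K"
    by (rule subsetD[OF ZK subgroup_nat_pow_closed[OF normal_imp_subgroup[OF center_normal] z]])
  ultimately have y_pow: "commutator G x g [^] p \<in> K"
    using normal_imp_subgroup[OF K] subgroup.m_closed by fastforce
  have c_pow: "commutator G (commutator G x g) x [^] p \<in> K"
    using subsetD[OF MK pth_power_mem_M[OF commutator_N_mem_N[OF n x]]] c by simp
  show ?thesis
    using normal.commutator_nat_pow_left_mem[OF K odd_p x g _ y_pow c_pow] central[OF n x] c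
    by simp
qed

lemma commutator_N_mem_generate_M_center:
  assumes u: "u \<in> N" and g: "g \<in> carrier G"
  shows "commutator G u g \<in> generate G (M \<union> center G)"
proof -
  interpret M: normal M G by (rule M_normal)
  let ?B = "generate G (M \<union> center G)"
  let ?C = "{commutator G u g | u g. u \<in> N \<and> g \<in> carrier G}"
  let ?A = "generate G (?C \<union> ?B)"
  have B_normal: "?B \<lhd> G"
    using normal_generate_Un_normal[OF M.subset _ center_normal] M.inv_op_closed2 by blast
  have A_normal: "?A \<lhd> G"
    by (rule normal_generate_commutators_Un[OF N_normal B_normal])
  have "?B \<subseteq> ?A"
    by (auto intro: generate.incl)
  have "?A = ?B"
  proof (rule ccontr)
    assume "?A \<noteq> ?B"
    then obtain L where L: "L \<lhd> G" "?B \<subseteq> L" "L \<subseteq> ?A" "L \<noteq> ?A"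
      and central: "?A \<subseteq> center_mod G L"
      using normal_psubset_central_step[OF B_normal A_normal \<open>?B \<subseteq> ?A\<close>] by auto
    have M_sub: "M \<subseteq> L" and Z_sub: "center G \<subseteq> L"
      using L(2) by (auto intro: generate.incl)
    have NG_central: "commutator G u g \<in> center_mod G L" if "u \<in> N" "g \<in> carrier G" for u g
      using that central by (auto intro: generate.incl)
    have "commutator G u g \<in> L" if u: "u \<in> N" and g: "g \<in> carrier G" for u g
      using commutator_pth_power_mem[OF L(1) M_sub Z_sub NG_central _ g]
      by (rule commutator_pth_powers_mem[OF L(1) g _ u])
    then have "?C \<union> ?B \<subseteq> L"
      using L(2) by auto
    then have "?A \<subseteq> L"
      by (rule generate_subgroup_incl[OF _ normal_imp_subgroup[OF L(1)]])
    then show False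
      using subset_antisym[OF L(3)] L(4) by simp
  qed
  moreover have "commutator G u g \<in> ?A"
    using u g by (auto intro: generate.incl)
  ultimately show ?thesis
    by simp
qed

lemma generate_M_center_subset_center_mod: "generate G (M \<union> center G) \<subseteq> center_mod G M"
proof (rule generate_subgroup_incl)
  show "M \<union> center G \<subseteq> center_mod G M"
    using normal_subset_center_mod[OF M_normal]
      center_subset_center_mod[OF normal_imp_subgroup[OF M_normal]] by blast
  show "subgroup (center_mod G M) G"
    by (rule normal_imp_subgroup[OF center_mod_normal[OF M_normal]])
qed

lemma commutator_N_pth_power_mem_M:
  assumes a: "a \<in> N" and g: "g \<in> carrier G"
  shows "commutator G a (g [^] p) \<in> M"
proof (rule normal.commutator_nat_pow_right_mem[OF M_normal _ g])
  show "a \<in> carrier G"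
    by (rule subgroup.mem_carrier[OF normal_imp_subgroup[OF N_normal] a])
  show "commutator G a g \<in> center_mod G M"
    using commutator_N_mem_generate_M_center[OF a g] generate_M_center_subset_center_mod by blast
  show "commutator G a g [^] p \<in> M"
    by (rule pth_power_mem_M[OF commutator_N_mem_N[OF a g]])
qed

lemma commutator_N_N_mem_M:
  assumes a: "a \<in> N" and b: "b \<in> N"
  shows "commutator G a b \<in> M"
proof -
  interpret M: normal M G by (rule M_normal)
  have aG: "a \<in> carrier G" and bG: "b \<in> carrier G"
    using a b subgroup.mem_carrier[OF normal_imp_subgroup[OF N_normal]] by auto
  have "commutator G (x [^] p) a \<in> M" if "x \<in> carrier G" for x
    using commutator_N_pth_power_mem_M[OF a that] commutator_mem_sym[OF M.subgroup_axioms aG] that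
    by simp
  then have "commutator G b a \<in> M"
    by (rule commutator_pth_powers_mem[OF M_normal aG _ b])
  then show ?thesis
    using commutator_mem_sym[OF M.subgroup_axioms aG bG] by simp
qed

lemma derived_N_subset_M: "derived G N \<subseteq> M"
  using derived_subset_of_commutators[OF normal_imp_subgroup[OF N_normal]
      normal_imp_subgroup[OF M_normal]] commutator_N_N_mem_M by blast

end

theorem theorem4p9:
  fixes G :: "('a, 'b) monoid_scheme" and p :: nat
  assumes "Factorial_Ring.prime p" and "odd p"
    and "p_group G p"
    and "quasi_powerful G p"
  shows "powerful (G\<lparr>carrier := pth_powers G p\<rparr>) p"
proof -
  interpret group G
    using assms(3) unfolding p_group_def by blast
  interpret quasi_powerful_p_group G p
    by unfold_locales (use assms in simp_all)
  show ?thesis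
    using powerful_subgroup_iff[OF normal_imp_subgroup[OF pth_powers_normal]]
      derived_N_subset_M by simp
qed

end
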